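(* For any finite alphabet $\mathfrak{G}$, the series $\mathcal{I}(q,t) = \sum_{\mathfrak{s}\preceq\mathfrak{t}} q^{\deg(\mathfrak{s})} t^{\deg(\mathfrak{t})}$ satisfies $\mathcal{I}(q,t) = 1 + t\,\mathcal{R}_\mathfrak{G}\big(\mathcal{I}(q,t) - qt\,\mathcal{R}_\mathfrak{G}(\mathcal{I}(q,t))\big) + qt\,\mathcal{R}_\mathfrak{G}(\mathcal{I}(q,t))$.
   Context: $\mathfrak{G}$ is a finite alphabet (letters with arities $|\mathtt{a}|\geq 1$), and $\mathcal{R}_\mathfrak{G}(t) = \sum_{\mathtt{a}\in\mathfrak{G}} t^{|\mathtt{a}|}$. A $\mathfrak{G}$-tree is either the leaf (the tree with no internal node) or a root decorated by a letter $\mathtt{a}\in\mathfrak{G}$ with $|\mathtt{a}|$ children that are $\mathfrak{G}$-trees; its degree $\deg$ is its number of internal nodes. The $\mathfrak{G}$-prefix poset is the set of $\mathfrak{G}$-trees ordered by $\mathfrak{s}\preceq\mathfrak{t}$ iff $\mathfrak{s}$ is a prefix of $\mathfrak{t}$, i.e. $\mathfrak{t}$ is obtained by grafting some $\mathfrak{G}$-trees onto the leaves of $\mathfrak{s}$. The series $\mathcal{I}(q,t)$ enumerates all intervals $[\mathfrak{s},\mathfrak{t}]$ of this poset, the sum ranging over all pairs of $\mathfrak{G}$-trees with $\mathfrak{s}\preceq\mathfrak{t}$. *)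

theory Defs
  imports "HOL-Computational_Algebra.Formal_Power_Series"
begin

datatype 'a tree = Leaf | Node 'a "'a tree list"

inductive gtree :: "'a set \<Rightarrow> ('a \<Rightarrow> nat) \<Rightarrow> 'a tree \<Rightarrow> bool" for G ar where
  gtree_Leaf: "gtree G ar Leaf"
| gtree_Node: "a \<in> G \<Longrightarrow> length ts = ar a \<Longrightarrow> (\<forall>t\<in>set ts. gtree G ar t)
               \<Longrightarrow> gtree G ar (Node a ts)"

fun deg :: "'a tree \<Rightarrow> nat" where
  "deg Leaf = 0"
| "deg (Node a ts) = Suc (sum_list (map deg ts))"

text \<open>Prefix order: t is obtained by grafting trees onto the leaves of s.\<close>
inductive is_prefix :: "'a tree \<Rightarrow> 'a tree \<Rightarrow> bool" where
  prefix_Leaf: "is_prefix Leaf t"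
| prefix_Node: "list_all2 is_prefix ss ts \<Longrightarrow> is_prefix (Node a ss) (Node a ts)"
monos list_all2_mono

text \<open>Bivariate series in int fps fps: outer variable t, inner variable q.
  Coefficient of q^n t^m is the number of intervals [s,t] of the G-prefix poset
  with deg s = n and deg t = m.\<close>
definition interval_series :: "'a set \<Rightarrow> ('a \<Rightarrow> nat) \<Rightarrow> int fps fps" where
  "interval_series G ar = Abs_fps (\<lambda>m. Abs_fps (\<lambda>n. of_nat (card
     {(s, t). gtree G ar s \<and> gtree G ar t \<and> is_prefix s t \<and> deg s = n \<and> deg t = m})))"

definition R_G :: "'a set \<Rightarrow> ('a \<Rightarrow> nat) \<Rightarrow> 'b::comm_semiring_1 \<Rightarrow> 'b" where
  "R_G G ar x = (\<Sum>a\<in>G. x ^ ar a)"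

end

(* An interval [s, t] with s the leaf is just a G-tree t; otherwise s and t have the same
   root letter a, and the interval splits into |a| intervals between corresponding children.
   Writing T for the series of G-trees, this gives I = T + q t R_G(I), while the root
   decomposition of trees gives T = 1 + t R_G(T).  Substituting T = I - q t R_G(I) into the
   latter is the claimed equation.  Both decompositions are instances of one functional
   equation for the generating series of a set built from a base set and from tuples of its
   own elements. *)

theory Submission
  imports Defs
begin

definition finite_levels :: "'b set \<Rightarrow> ('b \<Rightarrow> nat) \<Rightarrow> bool" where
  "finite_levels S w \<longleftrightarrow> (\<forall>n. finite {x\<in>S. w x = n})"

definition gen_fps :: "'b set \<Rightarrow> ('b \<Rightarrow> nat) \<Rightarrow> ('b \<Rightarrow> 'r::comm_semiring_1) \<Rightarrow> 'r fps" where
  "gen_fps S w f = Abs_fps (\<lambda>n. \<Sum>x\<in>{x\<in>S. w x = n}. f x)"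

definition tuples :: "nat \<Rightarrow> 'b set \<Rightarrow> 'b list set" where
  "tuples k S = {xs. set xs \<subseteq> S \<and> length xs = k}"

lemma finite_levels_subset:
  assumes "finite_levels S w" and "A \<subseteq> S" shows "finite_levels A w"
  unfolding finite_levels_def
proof
  fix n
  have "{x\<in>A. w x = n} \<subseteq> {x\<in>S. w x = n}" using assms(2) by blast
  thus "finite {x\<in>A. w x = n}" using assms(1) finite_subset unfolding finite_levels_def by blast
qed

lemma finite_levels_finite_le:
  assumes "finite_levels S w" shows "finite {x\<in>S. w x \<le> n}"
proof -
  have "{x\<in>S. w x \<le> n} = (\<Union>i\<le>n. {x\<in>S. w x = i})" by auto
  thus ?thesis using assms unfolding finite_levels_def by simp
qed

lemma finite_levels_if_finite_le:
  assumes "\<And>n. finite {x\<in>S. w x \<le> n}" shows "finite_levels S w"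
  unfolding finite_levels_def
proof
  fix n
  have "{x\<in>S. w x = n} \<subseteq> {x\<in>S. w x \<le> n}" by auto
  thus "finite {x\<in>S. w x = n}" using assms finite_subset by blast
qed

lemma finite_levels_tuples:
  assumes "finite_levels S w"
  shows "finite_levels (tuples k S) (\<lambda>xs. sum_list (map w xs))"
proof (rule finite_levels_if_finite_le)
  fix n
  have "{xs\<in>tuples k S. sum_list (map w xs) \<le> n} \<subseteq> tuples k {x\<in>S. w x \<le> n}"
  proof
    fix xs assume xs: "xs \<in> {xs\<in>tuples k S. sum_list (map w xs) \<le> n}"
    have "w x \<le> n" if "x \<in> set xs" for x
      using member_le_sum_list[of "w x" "map w xs"] that xs by auto
    thus "xs \<in> tuples k {x\<in>S. w x \<le> n}" using xs by (auto simp: tuples_def)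
  qed
  thus "finite {xs\<in>tuples k S. sum_list (map w xs) \<le> n}"
    using finite_lists_length_eq[OF finite_levels_finite_le[OF assms]]
    unfolding tuples_def by (rule finite_subset)
qed

lemma gen_fps_cong:
  "(\<And>x. x \<in> S \<Longrightarrow> w x = w' x) \<Longrightarrow> (\<And>x. x \<in> S \<Longrightarrow> f x = f' x) \<Longrightarrow>
   gen_fps S w f = gen_fps S w' f'"
  unfolding gen_fps_def by (intro arg_cong[where f = Abs_fps] ext sum.cong) auto

lemma gen_fps_singleton: "gen_fps {x} w f = fps_const (f x) * fps_X ^ w x"
proof (rule fps_ext)
  fix n
  have "{y\<in>{x}. w y = n} = (if n = w x then {x} else {})" by auto
  thus "fps_nth (gen_fps {x} w f) n = fps_nth (fps_const (f x) * fps_X ^ w x) n"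
    by (simp add: gen_fps_def fps_X_power_nth)
qed

lemma gen_fps_Un_disjoint:
  assumes "finite_levels (A \<union> B) w" and "A \<inter> B = {}"
  shows "gen_fps (A \<union> B) w f = gen_fps A w f + gen_fps B w f"
proof (rule fps_ext)
  fix n
  have "{x\<in>A \<union> B. w x = n} = {x\<in>A. w x = n} \<union> {x\<in>B. w x = n}" by auto
  moreover have "finite {x\<in>A. w x = n}" "finite {x\<in>B. w x = n}"
    using assms(1) unfolding finite_levels_def by (auto intro: finite_subset[rotated])
  ultimately show "fps_nth (gen_fps (A \<union> B) w f) n = fps_nth (gen_fps A w f + gen_fps B w f) n"
    using assms(2) by (auto simp: gen_fps_def intro: sum.union_disjoint)
qed

lemma gen_fps_UN_disjoint:
  assumes "finite I" and "finite_levels (\<Union>i\<in>I. A i) w"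
    and "\<forall>i\<in>I. \<forall>j\<in>I. i \<noteq> j \<longrightarrow> A i \<inter> A j = {}"
  shows "gen_fps (\<Union>i\<in>I. A i) w f = (\<Sum>i\<in>I. gen_fps (A i) w f)"
proof (rule fps_ext)
  fix n
  have "{x\<in>\<Union>i\<in>I. A i. w x = n} = (\<Union>i\<in>I. {x\<in>A i. w x = n})" by auto
  moreover have "\<forall>i\<in>I. finite {x\<in>A i. w x = n}"
    using assms(2) unfolding finite_levels_def by (auto intro: finite_subset[rotated])
  ultimately show "fps_nth (gen_fps (\<Union>i\<in>I. A i) w f) n = fps_nth (\<Sum>i\<in>I. gen_fps (A i) w f) n"
    using assms(1,3) unfolding gen_fps_def fps_sum_nth fps_nth_Abs_fps
    by (simp only:) (rule sum.UNION_disjoint; blast)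
qed

lemma gen_fps_image:
  assumes "inj_on h S" shows "gen_fps (h ` S) w f = gen_fps S (w \<circ> h) (f \<circ> h)"
proof (rule fps_ext)
  fix n
  have "{x\<in>h ` S. w x = n} = h ` {x\<in>S. w (h x) = n}" by auto
  moreover have "inj_on h {x\<in>S. w (h x) = n}" using assms by (rule inj_on_subset) auto
  ultimately show "fps_nth (gen_fps (h ` S) w f) n = fps_nth (gen_fps S (w \<circ> h) (f \<circ> h)) n"
    by (simp add: gen_fps_def sum.reindex)
qed

lemma fps_X_mult_gen_fps: "fps_X * gen_fps S w f = gen_fps S (\<lambda>x. Suc (w x)) f"
proof (rule fps_ext)
  fix n show "fps_nth (fps_X * gen_fps S w f) n = fps_nth (gen_fps S (\<lambda>x. Suc (w x)) f) n"
    by (cases n) (simp_all add: gen_fps_def)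
qed

lemma fps_const_mult_gen_fps: "fps_const c * gen_fps S w f = gen_fps S w (\<lambda>x. c * f x)"
  by (rule fps_ext) (simp add: gen_fps_def sum_distrib_left)

lemma gen_fps_mult:
  assumes "finite_levels A w" and "finite_levels B v"
  shows "gen_fps A w f * gen_fps B v g
           = gen_fps (A \<times> B) (\<lambda>(x, y). w x + v y) (\<lambda>(x, y). f x * g y)"
proof (rule fps_ext)
  fix n
  define P where "P = {p\<in>A \<times> B. (\<lambda>(x, y). w x + v y) p = n}"
  have "P \<subseteq> {x\<in>A. w x \<le> n} \<times> {y\<in>B. v y \<le> n}" by (auto simp: P_def)
  hence "finite P"
    by (rule finite_subset) (intro finite_cartesian_product finite_levels_finite_le assms)
  have "fps_nth (gen_fps A w f * gen_fps B v g) n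
          = (\<Sum>i=0..n. (\<Sum>x\<in>{x\<in>A. w x = i}. f x) * (\<Sum>y\<in>{y\<in>B. v y = n - i}. g y))"
    by (simp add: gen_fps_def fps_mult_nth)
  also have "\<dots> = (\<Sum>i=0..n. \<Sum>p\<in>{p\<in>P. w (fst p) = i}. (\<lambda>(x, y). f x * g y) p)"
  proof (rule sum.cong[OF refl])
    fix i assume "i \<in> {0..n}"
    hence "{p\<in>P. w (fst p) = i} = {x\<in>A. w x = i} \<times> {y\<in>B. v y = n - i}"
      by (auto simp: P_def)
    thus "(\<Sum>x\<in>{x\<in>A. w x = i}. f x) * (\<Sum>y\<in>{y\<in>B. v y = n - i}. g y)
            = (\<Sum>p\<in>{p\<in>P. w (fst p) = i}. (\<lambda>(x, y). f x * g y) p)"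
      by (simp add: sum_product sum.cartesian_product)
  qed
  also have "\<dots> = (\<Sum>p\<in>P. (\<lambda>(x, y). f x * g y) p)"
    using \<open>finite P\<close> by (intro sum.group) (auto simp: P_def)
  also have "\<dots> = fps_nth (gen_fps (A \<times> B) (\<lambda>(x, y). w x + v y) (\<lambda>(x, y). f x * g y)) n"
    by (simp add: gen_fps_def P_def)
  finally show "fps_nth (gen_fps A w f * gen_fps B v g) n
                  = fps_nth (gen_fps (A \<times> B) (\<lambda>(x, y). w x + v y) (\<lambda>(x, y). f x * g y)) n" .
qed

lemma tuples_Suc: "tuples (Suc k) S = (\<lambda>(x, xs). x # xs) ` (S \<times> tuples k S)"
  by (auto simp: tuples_def length_Suc_conv image_iff)

lemma gen_fps_power:
  assumes "finite_levels S w"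
  shows "gen_fps S w f ^ k
           = gen_fps (tuples k S) (\<lambda>xs. sum_list (map w xs)) (\<lambda>xs. prod_list (map f xs))"
proof (induction k)
  case 0
  have "tuples 0 S = {[]}" by (auto simp: tuples_def)
  thus ?case by (simp add: gen_fps_singleton)
next
  case (Suc k)
  have inj: "inj_on (\<lambda>(x, xs). x # xs) (S \<times> tuples k S)" by (auto simp: inj_on_def)
  have "gen_fps S w f ^ Suc k
      = gen_fps (S \<times> tuples k S) (\<lambda>(x, xs). w x + sum_list (map w xs))
                 (\<lambda>(x, xs). f x * prod_list (map f xs))"
    using Suc gen_fps_mult[OF assms finite_levels_tuples[OF assms]] by simp
  also have "\<dots> = gen_fps (tuples (Suc k) S) (\<lambda>xs. sum_list (map w xs)) (\<lambda>xs. prod_list (map f xs))"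
    unfolding tuples_Suc gen_fps_image[OF inj] by (rule gen_fps_cong) auto
  finally show ?case .
qed

lemma gen_fps_recursive_decomposition:
  fixes h :: "'a \<Rightarrow> 'b list \<Rightarrow> 'b"
  assumes "finite G" and levels: "finite_levels S w"
    and S_eq: "S = A \<union> (\<Union>a\<in>G. h a ` tuples (k a) S)"
    and h_inj: "\<And>a b xs ys. h a xs = h b ys \<Longrightarrow> a = b \<and> xs = ys"
    and h_notin: "\<And>a xs. h a xs \<notin> A"
    and w_h: "\<And>a xs. w (h a xs) = Suc (sum_list (map w xs))"
    and f_h: "\<And>a xs. f (h a xs) = c * prod_list (map f xs)"
  shows "gen_fps S w f = gen_fps A w f + fps_X * fps_const c * R_G G k (gen_fps S w f)"
proof -
  define U where "U = (\<Union>a\<in>G. h a ` tuples (k a) S)"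
  have S_Un: "S = A \<union> U" using S_eq unfolding U_def .
  have "finite_levels U w" using levels by (rule finite_levels_subset) (simp add: S_Un)
  have component: "gen_fps (h a ` tuples (k a) S) w f = fps_X * fps_const c * gen_fps S w f ^ k a"
    for a
  proof -
    have "inj_on (h a) (tuples (k a) S)" by (rule inj_onI) (use h_inj in blast)
    hence "gen_fps (h a ` tuples (k a) S) w f
             = gen_fps (tuples (k a) S) (\<lambda>xs. Suc (sum_list (map w xs))) (\<lambda>xs. c * prod_list (map f xs))"
      by (simp add: gen_fps_image w_h f_h comp_def)
    also have "\<dots> = fps_X * fps_const c * gen_fps S w f ^ k a"
      by (simp add: gen_fps_power[OF levels] fps_X_mult_gen_fps fps_const_mult_gen_fps mult.assoc)
    finally show ?thesis .
  qed
  have "A \<inter> U = {}" using h_notin by (auto simp: U_def)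
  with levels have "gen_fps S w f = gen_fps A w f + gen_fps U w f"
    unfolding S_Un by (rule gen_fps_Un_disjoint)
  also have "gen_fps U w f = (\<Sum>a\<in>G. gen_fps (h a ` tuples (k a) S) w f)"
    unfolding U_def using \<open>finite G\<close> \<open>finite_levels U w\<close>[unfolded U_def] h_inj
    by (intro gen_fps_UN_disjoint) blast+
  also have "\<dots> = fps_X * fps_const c * R_G G k (gen_fps S w f)"
    by (simp add: component R_G_def sum_distrib_left)
  finally show ?thesis .
qed

abbreviation gtrees :: "'a set \<Rightarrow> ('a \<Rightarrow> nat) \<Rightarrow> 'a tree set" where
  "gtrees G ar \<equiv> {t. gtree G ar t}"

lemma gtree_Node_iff:
  "gtree G ar (Node a ts) \<longleftrightarrow> a \<in> G \<and> length ts = ar a \<and> (\<forall>t\<in>set ts. gtree G ar t)"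
  by (auto intro: gtree.intros elim: gtree.cases)

lemma gtrees_decomposition:
  "gtrees G ar = {Leaf} \<union> (\<Union>a\<in>G. Node a ` tuples (ar a) (gtrees G ar))"
proof (rule set_eqI)
  fix t show "t \<in> gtrees G ar \<longleftrightarrow> t \<in> {Leaf} \<union> (\<Union>a\<in>G. Node a ` tuples (ar a) (gtrees G ar))"
    by (cases t) (auto simp: gtree_Node_iff tuples_def intro: gtree.intros)
qed

lemma finite_gtrees_deg_le:
  assumes "finite G" shows "finite {t\<in>gtrees G ar. deg t \<le> n}"
proof (induction n)
  case 0
  have "{t\<in>gtrees G ar. deg t \<le> 0} \<subseteq> {Leaf}" by (auto elim: deg.elims)
  thus ?case by (rule finite_subset) simp
next
  case (Suc n)
  let ?B = "{t\<in>gtrees G ar. deg t \<le> n}"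
  have "{t\<in>gtrees G ar. deg t \<le> Suc n} \<subseteq> {Leaf} \<union> (\<Union>a\<in>G. Node a ` tuples (ar a) ?B)"
  proof
    fix t assume t: "t \<in> {t\<in>gtrees G ar. deg t \<le> Suc n}"
    show "t \<in> {Leaf} \<union> (\<Union>a\<in>G. Node a ` tuples (ar a) ?B)"
    proof (cases t)
      case (Node a ts)
      have "deg c \<le> n" if "c \<in> set ts" for c
        using t Node member_le_sum_list[of "deg c" "map deg ts"] that by auto
      thus ?thesis using t Node by (auto simp: gtree_Node_iff tuples_def)
    qed simp
  qed
  moreover have "finite (tuples k ?B)" for k
    unfolding tuples_def by (rule finite_lists_length_eq) (rule Suc.IH)
  hence "finite ({Leaf} \<union> (\<Union>a\<in>G. Node a ` tuples (ar a) ?B))" using assms by simp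
  ultimately show ?case by (rule finite_subset)
qed

lemma finite_levels_gtrees: "finite G \<Longrightarrow> finite_levels (gtrees G ar) deg"
  by (rule finite_levels_if_finite_le) (rule finite_gtrees_deg_le)

lemma gen_fps_gtrees:
  fixes G :: "'a set"
  assumes "finite G"
  shows "gen_fps (gtrees G ar) deg (\<lambda>_. 1)
           = 1 + fps_X * R_G G ar (gen_fps (gtrees G ar) deg (\<lambda>_. 1 :: 'r::comm_semiring_1))"
proof -
  have "gen_fps (gtrees G ar) deg (\<lambda>_. 1)
          = gen_fps {Leaf :: 'a tree} deg (\<lambda>_. 1)
            + fps_X * fps_const 1 * R_G G ar (gen_fps (gtrees G ar) deg (\<lambda>_. 1 :: 'r))"
    by (rule gen_fps_recursive_decomposition[OF assms finite_levels_gtrees[OF assms]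
          gtrees_decomposition]) (simp_all add: map_replicate_const)
  thus ?thesis by (simp add: gen_fps_singleton)
qed

abbreviation intervals :: "'a set \<Rightarrow> ('a \<Rightarrow> nat) \<Rightarrow> ('a tree \<times> 'a tree) set" where
  "intervals G ar \<equiv> {(s, t). gtree G ar s \<and> gtree G ar t \<and> is_prefix s t}"

definition node_pair :: "'a \<Rightarrow> ('a tree \<times> 'a tree) list \<Rightarrow> 'a tree \<times> 'a tree" where
  "node_pair a ps = (Node a (map fst ps), Node a (map snd ps))"

lemma node_pair_eq_iff: "node_pair a ps = node_pair b qs \<longleftrightarrow> a = b \<and> ps = qs"
  by (auto simp: node_pair_def) (metis zip_map_fst_snd)

lemma is_prefix_Node_iff:
  "is_prefix (Node a ss) t \<longleftrightarrow> (\<exists>ts. t = Node a ts \<and> list_all2 is_prefix ss ts)"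
  by (auto intro: is_prefix.intros elim: is_prefix.cases)

lemma deg_le_if_is_prefix: "is_prefix s t \<Longrightarrow> deg s \<le> deg t"
proof (induction rule: is_prefix.induct)
  case (prefix_Node ss ts a)
  hence "list_all2 (\<lambda>s t. deg s \<le> deg t) ss ts" by (auto elim: list_all2_mono)
  hence "sum_list (map deg ss) \<le> sum_list (map deg ts)"
    by (induction rule: list_all2_induct) auto
  thus ?case by simp
qed simp

lemma node_pair_in_intervals_iff:
  "node_pair a ps \<in> intervals G ar \<longleftrightarrow> a \<in> G \<and> ps \<in> tuples (ar a) (intervals G ar)"
  by (auto simp: node_pair_def gtree_Node_iff is_prefix_Node_iff tuples_def
      list_all2_map1 list_all2_map2 list_all2_same)

lemma intervals_decomposition:
  "intervals G ar
     = (\<lambda>t. (Leaf, t)) ` gtrees G ar \<union> (\<Union>a\<in>G. node_pair a ` tuples (ar a) (intervals G ar))"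
  (is "_ = ?L \<union> ?N")
proof (intro equalityI subsetI)
  fix p assume p_in: "p \<in> intervals G ar"
  then obtain s t where p: "p = (s, t)" and "gtree G ar s" "gtree G ar t" "is_prefix s t"
    by blast
  show "p \<in> ?L \<union> ?N"
  proof (cases s)
    case Leaf
    thus ?thesis using p \<open>gtree G ar t\<close> by blast
  next
    case (Node a ss)
    then obtain ts where t: "t = Node a ts" and "list_all2 is_prefix ss ts"
      using \<open>is_prefix s t\<close> by (auto simp: is_prefix_Node_iff)
    hence p_eq: "p = node_pair a (zip ss ts)"
      using p Node by (simp add: node_pair_def list_all2_lengthD)
    hence "a \<in> G \<and> zip ss ts \<in> tuples (ar a) (intervals G ar)"
      using p_in by (simp only: p_eq node_pair_in_intervals_iff)
    thus ?thesis using p_eq by blast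
  qed
next
  fix p assume "p \<in> ?L \<union> ?N"
  thus "p \<in> intervals G ar"
  proof
    assume "p \<in> ?L"
    then obtain t where "gtree G ar t" and "p = (Leaf, t)" by (auto elim: imageE)
    thus ?thesis by (simp add: gtree_Leaf prefix_Leaf)
  next
    assume "p \<in> ?N"
    then obtain a ps where "a \<in> G" "ps \<in> tuples (ar a) (intervals G ar)" and "p = node_pair a ps"
      by (auto elim: UN_E imageE)
    thus ?thesis by (simp only: node_pair_in_intervals_iff)
  qed
qed

lemma finite_levels_intervals:
  assumes "finite G" shows "finite_levels (intervals G ar) (deg \<circ> snd)"
proof (rule finite_levels_if_finite_le)
  fix n
  let ?B = "{t\<in>gtrees G ar. deg t \<le> n}"
  have "{p\<in>intervals G ar. (deg \<circ> snd) p \<le> n} \<subseteq> ?B \<times> ?B"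
    by (auto dest: deg_le_if_is_prefix)
  moreover have "finite (?B \<times> ?B)" using finite_gtrees_deg_le[OF assms] by blast
  ultimately show "finite {p\<in>intervals G ar. (deg \<circ> snd) p \<le> n}" by (rule finite_subset)
qed

lemma power_sum_list: "x ^ sum_list (map g xs) = prod_list (map (\<lambda>y. x ^ g y) xs)"
  by (induction xs) (simp_all add: power_add)

lemma gen_fps_intervals:
  fixes G :: "'a set" and ar :: "'a \<Rightarrow> nat"
  assumes "finite G"
  defines "I \<equiv> gen_fps (intervals G ar) (deg \<circ> snd) (\<lambda>p. fps_X ^ deg (fst p) :: 'r::comm_semiring_1 fps)"
  shows "I = gen_fps (gtrees G ar) deg (\<lambda>_. 1) + fps_X * fps_const fps_X * R_G G ar I"
proof -
  have inj: "inj_on (\<lambda>t. (Leaf :: 'a tree, t)) (gtrees G ar)" by (rule inj_onI) simp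
  have "gen_fps ((\<lambda>t. (Leaf :: 'a tree, t)) ` gtrees G ar) (deg \<circ> snd) (\<lambda>p. fps_X ^ deg (fst p))
           = (gen_fps (gtrees G ar) deg (\<lambda>_. 1) :: 'r fps fps)"
    unfolding gen_fps_image[OF inj] by (rule gen_fps_cong) auto
  moreover have "I = gen_fps ((\<lambda>t. (Leaf :: 'a tree, t)) ` gtrees G ar) (deg \<circ> snd) (\<lambda>p. fps_X ^ deg (fst p))
                       + fps_X * fps_const fps_X * R_G G ar I"
    unfolding I_def
    by (rule gen_fps_recursive_decomposition[OF assms(1) finite_levels_intervals[OF assms(1)]
          intervals_decomposition node_pair_eq_iff[THEN iffD1]])
       (auto simp: node_pair_def power_sum_list)
  ultimately show ?thesis by simp
qed

lemma sum_fps_X_power: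
  assumes "finite F"
  shows "(\<Sum>x\<in>F. fps_X ^ g x) = Abs_fps (\<lambda>n. of_nat (card {x\<in>F. g x = n}) :: 'r::comm_semiring_1)"
proof (rule fps_ext)
  fix n
  have "fps_nth (\<Sum>x\<in>F. fps_X ^ g x) n = (\<Sum>x\<in>F. if g x = n then 1 else (0 :: 'r))"
    unfolding fps_sum_nth by (intro sum.cong) (auto simp: fps_X_power_nth)
  also have "\<dots> = (\<Sum>x\<in>{x\<in>F. g x = n}. 1)" by (rule sum.inter_filter[symmetric, OF assms])
  also have "\<dots> = fps_nth (Abs_fps (\<lambda>n. of_nat (card {x\<in>F. g x = n}))) n" by simp
  finally show "fps_nth (\<Sum>x\<in>F. fps_X ^ g x) n
                  = fps_nth (Abs_fps (\<lambda>n. of_nat (card {x\<in>F. g x = n}) :: 'r)) n" .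
qed

lemma interval_series_eq_gen_fps:
  assumes "finite G"
  shows "interval_series G ar = gen_fps (intervals G ar) (deg \<circ> snd) (\<lambda>p. fps_X ^ deg (fst p))"
proof (rule fps_ext)
  fix m
  let ?P = "{p\<in>intervals G ar. (deg \<circ> snd) p = m}"
  have "finite ?P" using finite_levels_intervals[OF assms] by (simp add: finite_levels_def)
  hence "fps_nth (gen_fps (intervals G ar) (deg \<circ> snd) (\<lambda>p. fps_X ^ deg (fst p))) m
           = Abs_fps (\<lambda>n. of_nat (card {p\<in>?P. deg (fst p) = n}))"
    unfolding gen_fps_def fps_nth_Abs_fps by (rule sum_fps_X_power)
  also have "\<dots> = fps_nth (interval_series G ar) m"
  proof -
    have "{p\<in>?P. deg (fst p) = n}
            = {(s, t). gtree G ar s \<and> gtree G ar t \<and> is_prefix s t \<and> deg s = n \<and> deg t = m}" for n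
      by auto
    thus ?thesis by (simp add: interval_series_def)
  qed
  finally show "fps_nth (interval_series G ar) m
                  = fps_nth (gen_fps (intervals G ar) (deg \<circ> snd) (\<lambda>p. fps_X ^ deg (fst p))) m" ..
qed

theorem proposition3p13:
  fixes G :: "'a set" and ar :: "'a \<Rightarrow> nat"
  assumes "finite G" and "\<forall>a\<in>G. ar a \<ge> 1"
  defines "q \<equiv> fps_const (fps_X :: int fps)" and "t \<equiv> (fps_X :: int fps fps)"
  defines "I \<equiv> interval_series G ar"
  shows "I = 1 + t * R_G G ar (I - q * t * R_G G ar I) + q * t * R_G G ar I"
proof -
  let ?T = "gen_fps (gtrees G ar) deg (\<lambda>_. 1) :: int fps fps"
  have qt: "q * t = fps_X * fps_const fps_X" by (simp add: q_def t_def mult.commute)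
  have I_eq: "I = ?T + q * t * R_G G ar I"
    unfolding qt I_def interval_series_eq_gen_fps[OF assms(1)]
    by (rule gen_fps_intervals[OF assms(1)])
  hence T_eq: "I - q * t * R_G G ar I = ?T" by (metis add_diff_cancel_right')
  have "1 + t * R_G G ar ?T = ?T" unfolding t_def by (rule gen_fps_gtrees[OF assms(1), symmetric])
  thus ?thesis unfolding T_eq using I_eq by (simp only:)
qed

end
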